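(* For all commands $c, c'$ of the coalesced projection machine, viewed also as commands of the (non-coalesced) projection machine by expanding $\mathsf{pick}_n$ and $\mathsf{drop}_n$ as macros: (1) $c \to c'$ in the coalesced machine if and only if $c \to c'$ in the non-coalesced machine; and (2) $c \hookrightarrow c'$ in the coalesced machine if and only if $c \hookrightarrow c'$ in the non-coalesced machine.
   Context: Pure $\lambda$-terms $v ::= x \mid v\,v \mid \lambda x.v$, with capture-avoiding substitution $v[v'/x]$. Non-coalesced projection machine. Commands $c ::= \langle v \,\|\, E\rangle$; terms $v ::= x \mid v\,v \mid \lambda x.v \mid \mathsf{car}(S)$; co-terms $E ::= v\cdot E \mid S$; stuck co-terms $S ::= \mathsf{tp} \mid \mathsf{cdr}(S)$. Reduction: $\langle v\,v' \,\|\, E\rangle \to \langle v \,\|\, v'\cdot E\rangle$; $\langle \lambda x.v \,\|\, v'\cdot E\rangle \to \langle v[v'/x] \,\|\, E\rangle$; $\langle \lambda x.v \,\|\, S\rangle \to \langle v[\mathsf{car}(S)/x] \,\|\, \mathsf{cdr}(S)\rangle$. Readback: $\langle v \,\|\, v'\cdot E\rangle \hookrightarrow \langle v\,v' \,\|\, E\rangle$; $\langle v \,\|\, \mathsf{tp}\rangle \hookrightarrow v$; $\langle v \,\|\, \mathsf{cdr}(S)\rangle \hookrightarrow \langle \lambda x.v[x/\mathsf{car}(S)] \,\|\, S\rangle$ with $x$ fresh, where $v[x/u]$ replaces every occurrence of the subterm $u$ in $v$ by $x$. Macros: $\mathsf{drop}_0(E) = E$, $\mathsf{drop}_{n+1}(E)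 = \mathsf{cdr}(\mathsf{drop}_n(E))$, $\mathsf{pick}_n(E) = \mathsf{car}(\mathsf{drop}_n(E))$. Coalesced projection machine. Commands $c ::= \langle v \,\|\, E\rangle$; terms $v ::= x \mid v\,v \mid \lambda x.v \mid \mathsf{pick}_n(\mathsf{tp})$; co-terms $E ::= v\cdot E \mid \mathsf{drop}_n(\mathsf{tp})$ ($n$ a natural number). Reduction: $\langle v\,v' \,\|\, E\rangle \to \langle v \,\|\, v'\cdot E\rangle$; $\langle \lambda x.v \,\|\, v'\cdot E\rangle \to \langle v[v'/x] \,\|\, E\rangle$; $\langle \lambda x.v \,\|\, \mathsf{drop}_n(\mathsf{tp})\rangle \to \langle v[\mathsf{pick}_n(\mathsf{tp})/x] \,\|\, \mathsf{drop}_{n+1}(\mathsf{tp})\rangle$. Readback: $\langle v \,\|\, v'\cdot E\rangle \hookrightarrow \langle v\,v' \,\|\, E\rangle$; $\langle v \,\|\, \mathsf{tp}\rangle \hookrightarrow v$; $\langle v \,\|\, \mathsf{drop}_{n+1}(\mathsf{tp})\rangle \hookrightarrow \langle \lambda x.v[x/\mathsf{pick}_n(\mathsf{tp})] \,\|\, \mathsf{drop}_n(\mathsf{tp})\rangle$ where $x$ is not free in $v$ and $v[x/\mathsf{pick}_n(\mathsf{tp})]$ replaces all occurrences of $\mathsf{pick}_n(\mathsf{tp})$ in $v$ by $x$. *)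

theory Defs
  imports Main
begin

text \<open>Variables are represented by de Bruijn indices (pure lambda-terms modulo
alpha-equivalence); capture-avoiding substitution is the standard de Bruijn
substitution with lifting.\<close>

datatype stk = Tp | Cdr stk
datatype tm = Var nat | App tm tm | Lam tm | Car stk
datatype cotm = Push tm cotm | St stk
datatype cmd = Cmd tm cotm

fun lift :: "nat \<Rightarrow> tm \<Rightarrow> tm" where
  "lift k (Var i) = Var (if i < k then i else Suc i)"
| "lift k (App a b) = App (lift k a) (lift k b)"
| "lift k (Lam t) = Lam (lift (Suc k) t)"
| "lift k (Car S) = Car S"

fun subst :: "tm \<Rightarrow> nat \<Rightarrow> tm \<Rightarrow> tm" where
  "subst (Var i) k s = (if i < k then Var i else if i = k then s else Var (i - 1))"
| "subst (App a b) k s = App (subst a k s) (subst b k s)"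
| "subst (Lam t) k s = Lam (subst t (Suc k) (lift 0 s))"
| "subst (Car S) k s = Car S"

text \<open>abstr d S v: the body of (lambda x. v[x/car(S)]) with x fresh, at binder depth d:
every occurrence of car(S) becomes the bound variable, other free variables are lifted.\<close>
fun abstr :: "nat \<Rightarrow> stk \<Rightarrow> tm \<Rightarrow> tm" where
  "abstr d S (Var i) = Var (if i < d then i else Suc i)"
| "abstr d S (App a b) = App (abstr d S a) (abstr d S b)"
| "abstr d S (Lam t) = Lam (abstr (Suc d) S t)"
| "abstr d S (Car S') = (if S' = S then Var d else Car S')"

inductive nc_step :: "cmd \<Rightarrow> cmd \<Rightarrow> bool" where
  "nc_step (Cmd (App v v') E) (Cmd v (Push v' E))"
| "nc_step (Cmd (Lam v) (Push v' E)) (Cmd (subst v 0 v') E)"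
| "nc_step (Cmd (Lam v) (St S)) (Cmd (subst v 0 (Car S)) (St (Cdr S)))"

inductive nc_rb :: "cmd \<Rightarrow> cmd + tm \<Rightarrow> bool" where
  "nc_rb (Cmd v (Push v' E)) (Inl (Cmd (App v v') E))"
| "nc_rb (Cmd v (St Tp)) (Inr v)"
| "nc_rb (Cmd v (St (Cdr S))) (Inl (Cmd (Lam (abstr 0 S v)) (St S)))"

fun drop_n :: "nat \<Rightarrow> stk \<Rightarrow> stk" where
  "drop_n 0 S = S"
| "drop_n (Suc n) S = Cdr (drop_n n S)"

definition pick_n :: "nat \<Rightarrow> stk \<Rightarrow> tm" where
  "pick_n n S = Car (drop_n n S)"

datatype ctm = CVar nat | CApp ctm ctm | CLam ctm | Pick nat   (* Pick n = pick_n(tp) *)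
datatype ccotm = CPush ctm ccotm | Drop nat                   (* Drop n = drop_n(tp) *)
datatype ccmd = CCmd ctm ccotm

fun clift :: "nat \<Rightarrow> ctm \<Rightarrow> ctm" where
  "clift k (CVar i) = CVar (if i < k then i else Suc i)"
| "clift k (CApp a b) = CApp (clift k a) (clift k b)"
| "clift k (CLam t) = CLam (clift (Suc k) t)"
| "clift k (Pick n) = Pick n"

fun csubst :: "ctm \<Rightarrow> nat \<Rightarrow> ctm \<Rightarrow> ctm" where
  "csubst (CVar i) k s = (if i < k then CVar i else if i = k then s else CVar (i - 1))"
| "csubst (CApp a b) k s = CApp (csubst a k s) (csubst b k s)"
| "csubst (CLam t) k s = CLam (csubst t (Suc k) (clift 0 s))"
| "csubst (Pick n) k s = Pick n"

fun cabstr :: "nat \<Rightarrow> nat \<Rightarrow> ctm \<Rightarrow> ctm" where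
  "cabstr d n (CVar i) = CVar (if i < d then i else Suc i)"
| "cabstr d n (CApp a b) = CApp (cabstr d n a) (cabstr d n b)"
| "cabstr d n (CLam t) = CLam (cabstr (Suc d) n t)"
| "cabstr d n (Pick m) = (if m = n then CVar d else Pick m)"

inductive c_step :: "ccmd \<Rightarrow> ccmd \<Rightarrow> bool" where
  "c_step (CCmd (CApp v v') E) (CCmd v (CPush v' E))"
| "c_step (CCmd (CLam v) (CPush v' E)) (CCmd (csubst v 0 v') E)"
| "c_step (CCmd (CLam v) (Drop n)) (CCmd (csubst v 0 (Pick n)) (Drop (Suc n)))"

inductive c_rb :: "ccmd \<Rightarrow> ccmd + ctm \<Rightarrow> bool" where
  "c_rb (CCmd v (CPush v' E)) (Inl (CCmd (CApp v v') E))"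
| "c_rb (CCmd v (Drop 0)) (Inr v)"
| "c_rb (CCmd v (Drop (Suc n))) (Inl (CCmd (CLam (cabstr 0 n v)) (Drop n)))"

fun emb_tm :: "ctm \<Rightarrow> tm" where
  "emb_tm (CVar i) = Var i"
| "emb_tm (CApp a b) = App (emb_tm a) (emb_tm b)"
| "emb_tm (CLam t) = Lam (emb_tm t)"
| "emb_tm (Pick n) = pick_n n Tp"

fun emb_co :: "ccotm \<Rightarrow> cotm" where
  "emb_co (CPush v E) = Push (emb_tm v) (emb_co E)"
| "emb_co (Drop n) = St (drop_n n Tp)"

fun emb_cmd :: "ccmd \<Rightarrow> cmd" where
  "emb_cmd (CCmd v E) = Cmd (emb_tm v) (emb_co E)"

end

theory Submission
  imports Defs
begin

text \<open>Macro expansion is injective and commutes with lifting, substitution and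
abstraction, so each coalesced rule is literally an instance of the corresponding
non-coalesced rule. Conversely, every non-coalesced step or readback out of an expanded
command lands again in the image of the expansion, because a stuck co-term matching
\<open>cdr(S)\<close> that is \<open>drop\<^sub>m(tp)\<close> forces \<open>m = n + 1\<close> and
\<open>S = drop\<^sub>n(tp)\<close>; there it coincides with the coalesced relation.\<close>

lemma drop_n_Tp_inject[simp]: "drop_n n Tp = drop_n m Tp \<longleftrightarrow> n = m"
  by (induction n arbitrary: m) (case_tac m; simp)+

lemma Cdr_eq_drop_n_Tp_iff: "Cdr S = drop_n m Tp \<longleftrightarrow> (\<exists>n. m = Suc n \<and> S = drop_n n Tp)"
  by (cases m) auto

lemma emb_tm_inject[simp]: "emb_tm a = emb_tm b \<longleftrightarrow> a = b"
  by (induction a arbitrary: b; case_tac b; auto simp: pick_n_def)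

lemma emb_co_inject[simp]: "emb_co a = emb_co b \<longleftrightarrow> a = b"
  by (induction a arbitrary: b; case_tac b; auto)

lemma emb_cmd_inject[simp]: "emb_cmd a = emb_cmd b \<longleftrightarrow> a = b"
  by (cases a; cases b; auto)

lemma emb_tm_clift[simp]: "emb_tm (clift k t) = lift k (emb_tm t)"
  by (induction t arbitrary: k) (auto simp: pick_n_def)

lemma emb_tm_csubst[simp]: "emb_tm (csubst t k s) = subst (emb_tm t) k (emb_tm s)"
  by (induction t arbitrary: k s) (auto simp: pick_n_def)

lemma emb_tm_cabstr[simp]: "emb_tm (cabstr d n t) = abstr d (drop_n n Tp) (emb_tm t)"
  by (induction t arbitrary: d) (auto simp: pick_n_def)

lemma emb_tm_eq_App_iff:
  "emb_tm t = App a b \<longleftrightarrow> (\<exists>a' b'. t = CApp a' b' \<and> a = emb_tm a' \<and> b = emb_tm b')"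
  by (cases t) (auto simp: pick_n_def)

lemma emb_tm_eq_Lam_iff: "emb_tm t = Lam a \<longleftrightarrow> (\<exists>a'. t = CLam a' \<and> a = emb_tm a')"
  by (cases t) (auto simp: pick_n_def)

lemma emb_co_eq_Push_iff:
  "emb_co E = Push a F \<longleftrightarrow> (\<exists>a' F'. E = CPush a' F' \<and> a = emb_tm a' \<and> F = emb_co F')"
  by (cases E) auto

lemma emb_co_eq_St_iff: "emb_co E = St S \<longleftrightarrow> (\<exists>n. E = Drop n \<and> S = drop_n n Tp)"
  by (cases E) auto

lemmas emb_eq_iffs = emb_tm_eq_App_iff emb_tm_eq_Lam_iff emb_co_eq_Push_iff emb_co_eq_St_iff

lemma nc_step_emb_cmd_iff:
  "nc_step (emb_cmd c) d \<longleftrightarrow> (\<exists>c'. c_step c c' \<and> d = emb_cmd c')"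
proof
  assume "nc_step (emb_cmd c) d"
  then show "\<exists>c'. c_step c c' \<and> d = emb_cmd c'"
    by (cases c) (fastforce simp: emb_eq_iffs pick_n_def elim!: nc_step.cases intro: c_step.intros)
next
  assume "\<exists>c'. c_step c c' \<and> d = emb_cmd c'"
  then show "nc_step (emb_cmd c) d"
    by (auto simp: pick_n_def elim!: c_step.cases intro: nc_step.intros)
qed

lemma nc_rb_emb_cmd_Inl_iff:
  "nc_rb (emb_cmd c) (Inl d) \<longleftrightarrow> (\<exists>c'. c_rb c (Inl c') \<and> d = emb_cmd c')"
proof
  assume "nc_rb (emb_cmd c) (Inl d)"
  then show "\<exists>c'. c_rb c (Inl c') \<and> d = emb_cmd c'"
    by (cases c) (fastforce simp: emb_eq_iffs Cdr_eq_drop_n_Tp_iff elim!: nc_rb.cases intro: c_rb.intros)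
next
  assume "\<exists>c'. c_rb c (Inl c') \<and> d = emb_cmd c'"
  then show "nc_rb (emb_cmd c) (Inl d)"
    by (auto elim!: c_rb.cases intro: nc_rb.intros)
qed

theorem theorem6:
  fixes c c' :: ccmd
  shows "(c_step c c' \<longleftrightarrow> nc_step (emb_cmd c) (emb_cmd c'))
       \<and> (c_rb c (Inl c') \<longleftrightarrow> nc_rb (emb_cmd c) (Inl (emb_cmd c')))"
  by (simp add: nc_step_emb_cmd_iff nc_rb_emb_cmd_Inl_iff)

end
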